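(* Let $s$ be a Sturmian word and let $w$ be a non-empty factor of $s$. If $w$ is right special, then $r_s(w)$ equals the first letter of $w$. If $w$ is left special, then $r_s(w)$ equals the last letter of $w$.
   Context: A Sturmian word is an infinite word $s\in\{a,b\}^{\omega}$ that is aperiodic (not ultimately periodic) and balanced: for all factors $u,v$ of $s$ with $|u|=|v|$ one has $||u|_x-|v|_x|\le 1$ for $x\in\{a,b\}$, where $|u|_x$ is the number of occurrences of the letter $x$ in $u$. $\mathcal F^+ s$ denotes the set of non-empty factors of $s$. A non-empty factor $w$ of $s$ is rich in the letter $z\in\{a,b\}$ if there is a factor $v$ of $s$ with $|v|=|w|$ and $|w|_z>|v|_z$; every non-empty factor of a Sturmian word is rich in exactly one of the letters $a,b$, and $r_s:\mathcal F^+ s\to\{a,b\}$ maps $w$ to the letter in which $w$ is rich. A factor $u$ is right special (resp. left special) if there are distinct letters $x,y$ with $ux,uy$ (resp. $xu,yu$) factors of $s$. *)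

theory Defs
  imports Main
begin

datatype letter = a | b

type_synonym word = "nat \<Rightarrow> letter"

definition factors :: "word \<Rightarrow> letter list set" where
  "factors s = {w. \<exists>i. w = map s [i..<i + length w]}"

definition factors_ne :: "word \<Rightarrow> letter list set" where
  "factors_ne s = {w \<in> factors s. w \<noteq> []}"

definition count_letter :: "letter list \<Rightarrow> letter \<Rightarrow> nat" where
  "count_letter u x = length (filter (\<lambda>y. y = x) u)"

definition ultimately_periodic :: "word \<Rightarrow> bool" where
  "ultimately_periodic s \<longleftrightarrow> (\<exists>p>0. \<exists>n0. \<forall>n\<ge>n0. s (n + p) = s n)"

definition balanced :: "word \<Rightarrow> bool" where
  "balanced s \<longleftrightarrow> (\<forall>u\<in>factors s. \<forall>v\<in>factors s. length u = length v \<longrightarrow>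
     (\<forall>x. \<bar>int (count_letter u x) - int (count_letter v x)\<bar> \<le> 1))"

definition sturmian :: "word \<Rightarrow> bool" where
  "sturmian s \<longleftrightarrow> \<not> ultimately_periodic s \<and> balanced s"

definition rich_in :: "word \<Rightarrow> letter list \<Rightarrow> letter \<Rightarrow> bool" where
  "rich_in s w z \<longleftrightarrow> w \<in> factors_ne s \<and>
     (\<exists>v\<in>factors s. length v = length w \<and> count_letter w z > count_letter v z)"

text \<open>The letter in which a non-empty factor is rich (unique for Sturmian words).\<close>
definition r :: "word \<Rightarrow> letter list \<Rightarrow> letter" where
  "r s w = (THE z. rich_in s w z)"

definition right_special :: "word \<Rightarrow> letter list \<Rightarrow> bool" where
  "right_special s u \<longleftrightarrow> (\<exists>x y. x \<noteq> y \<and> u @ [x] \<in> factors s \<and> u @ [y] \<in> factors s)"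

definition left_special :: "word \<Rightarrow> letter list \<Rightarrow> bool" where
  "left_special s u \<longleftrightarrow> (\<exists>x y. x \<noteq> y \<and> x # u \<in> factors s \<and> y # u \<in> factors s)"

end

theory Submission
  imports Defs
begin

text \<open>
  Write a right special factor as \<open>w = c w'\<close>. Since it extends to the right by two distinct
  letters, one extension \<open>w' d\<close> has \<open>d \<noteq> c\<close>; it is a factor of the same length as \<open>w\<close> with
  one occurrence of \<open>c\<close> fewer, so \<open>w\<close> is rich in \<open>c\<close>.
  Balancedness is only needed to make the rich letter unique, so that \<open>r s w\<close> is determined.
\<close>

lemma factors_appendD:
  assumes "u @ v \<in> factors s"
  shows "u \<in> factors s" and "v \<in> factors s"
proof -
  obtain i where i: "u @ v = map s [i..<i + length u + length v]"
    using assms unfolding factors_def by (auto simp: add.assoc)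
  have "[i..<i + length u + length v] = [i..<i + length u] @ [i + length u..<i + length u + length v]"
    using upt_add_eq_append[of i "i + length u" "length v"] by simp
  with i have "u = map s [i..<i + length u]" and "v = map s [i + length u..<i + length u + length v]"
    by (simp_all add: append_eq_append_conv)
  then show "u \<in> factors s" and "v \<in> factors s"
    unfolding factors_def by blast+
qed

lemma count_letter_Nil [simp]: "count_letter [] z = 0"
  by (simp add: count_letter_def)

lemma count_letter_Cons [simp]: "count_letter (x # u) z = (if x = z then 1 else 0) + count_letter u z"
  by (simp add: count_letter_def)

lemma count_letter_append [simp]: "count_letter (u @ v) z = count_letter u z + count_letter v z"
  by (simp add: count_letter_def)

lemma count_letter_other:
  assumes "x \<noteq> z"
  shows "count_letter u x + count_letter u z = length u"
proof (induction u)
  case (Cons y u)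
  with assms show ?case
    by (cases x; cases y; cases z) auto
qed simp

lemma rich_in_unique:
  assumes "balanced s" and "rich_in s w z" and "rich_in s w y"
  shows "y = z"
proof (rule ccontr)
  assume "y \<noteq> z"
  obtain v1 where v1: "v1 \<in> factors s" "length v1 = length w" "count_letter v1 z < count_letter w z"
    using assms(2) unfolding rich_in_def by blast
  obtain v2 where v2: "v2 \<in> factors s" "length v2 = length w" "count_letter v2 y < count_letter w y"
    using assms(3) unfolding rich_in_def by blast
  have "count_letter w z < count_letter v2 z"
    using count_letter_other[OF \<open>y \<noteq> z\<close>, of v2] count_letter_other[OF \<open>y \<noteq> z\<close>, of w] v2 by linarith
  moreover have "\<bar>int (count_letter v2 z) - int (count_letter v1 z)\<bar> \<le> 1"
    using assms(1) v1 v2 unfolding balanced_def by auto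
  ultimately show False
    using v1(3) by linarith
qed

lemma r_eqI: "balanced s \<Longrightarrow> rich_in s w z \<Longrightarrow> r s w = z"
  unfolding r_def using rich_in_unique by blast

lemma rich_in_hd_if_right_special:
  assumes "w \<in> factors_ne s" and "right_special s w"
  shows "rich_in s w (hd w)"
proof -
  obtain c w' where w: "w = c # w'"
    using assms(1) unfolding factors_ne_def by (cases w) auto
  obtain d where "d \<noteq> c" and "w @ [d] \<in> factors s"
    using assms(2) unfolding right_special_def by metis
  then have "w' @ [d] \<in> factors s"
    using factors_appendD(2)[of "[c]" "w' @ [d]"] w by simp
  with \<open>d \<noteq> c\<close> show ?thesis
    using assms(1) unfolding rich_in_def w by (intro conjI bexI[of _ "w' @ [d]"]) auto
qed

lemma rich_in_last_if_left_special:
  assumes "w \<in> factors_ne s" and "left_special s w"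
  shows "rich_in s w (last w)"
proof -
  obtain w' c where w: "w = w' @ [c]"
    using assms(1) unfolding factors_ne_def by (cases w rule: rev_cases) auto
  obtain d where "d \<noteq> c" and "d # w \<in> factors s"
    using assms(2) unfolding left_special_def by metis
  then have "d # w' \<in> factors s"
    using factors_appendD(1)[of "d # w'" "[c]"] w by simp
  with \<open>d \<noteq> c\<close> show ?thesis
    using assms(1) unfolding rich_in_def w by (intro conjI bexI[of _ "d # w'"]) auto
qed

theorem mainTheorem1:
  fixes s :: word and w :: "letter list"
  assumes "sturmian s" and "w \<in> factors_ne s"
  shows "(right_special s w \<longrightarrow> r s w = hd w) \<and> (left_special s w \<longrightarrow> r s w = last w)"
proof -
  have "balanced s"
    using assms(1) unfolding sturmian_def by simp
  then show ?thesis
    using r_eqI rich_in_hd_if_right_special rich_in_last_if_left_special assms(2) by blast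
qed

end
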